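(* Let $p_0,p_1,p_2$ be positive integers with $\gcd(p_0,p_1,p_2)=1$, and put $n=p_0+p_1+p_2$. Let $E=(\mathbb{Z}/n\mathbb{Z})\times\{0,1,2\}$ and define permutations $\sigma_0,\sigma_1$ of $E$ by $$\sigma_0(m,0)=(m,1),\quad \sigma_0(m,1)=(m,2),\quad \sigma_0(m,2)=(m,0),$$ $$\sigma_1(m,0)=(m-p_1,2),\quad \sigma_1(m,1)=(m-p_2,0),\quad \sigma_1(m,2)=(m-p_0,1),$$ with arithmetic in the first coordinate modulo $n$. Let $\alpha=\gcd(n,\,p_0p_1-p_2^2)$. Then the subgroup $\langle\sigma_0\sigma_1,\sigma_1\sigma_0\rangle$ of the symmetric group on $E$ has order $n^2/\alpha$.
   Context: These $\sigma_0,\sigma_1$ are the monodromy permutations of the dessin drawn on the rational billiards surface of the triangle with angles $(p_0\pi/n,p_1\pi/n,p_2\pi/n)$, acting on its $3n$ edges labeled $(m,i)$. Products are composition of functions: $(\sigma_0\sigma_1)(e)=\sigma_0(\sigma_1(e))$. *)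

theory Defs
  imports "HOL-Algebra.Algebra"
begin

definition dessin_edges :: "nat \<Rightarrow> (nat \<times> nat) set" where
  "dessin_edges n = {0..<n} \<times> {0..<3}"

definition sigma0 :: "nat \<Rightarrow> nat \<times> nat \<Rightarrow> nat \<times> nat" where
  "sigma0 n = restrict (\<lambda>(m, i). (m, (i + 1) mod 3)) (dessin_edges n)"

definition sub_mod :: "nat \<Rightarrow> nat \<Rightarrow> nat \<Rightarrow> nat" where
  "sub_mod n m p = nat ((int m - int p) mod int n)"

definition sigma1 :: "nat \<Rightarrow> nat \<Rightarrow> nat \<Rightarrow> nat \<times> nat \<Rightarrow> nat \<times> nat" where
  "sigma1 p0 p1 p2 = (let n = p0 + p1 + p2 in
     restrict (\<lambda>(m, i).
        if i = 0 then (sub_mod n m p1, 2)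
        else if i = 1 then (sub_mod n m p2, 0)
        else (sub_mod n m p0, 1)) (dessin_edges n))"

end

theory Submission
  imports Defs
begin

(*
  Both products preserve the level i of an edge (m, i) and translate m by an offset that
  depends only on i: sigma0 sigma1 by (-p1, -p2, -p0) and sigma1 sigma0 by (-p2, -p0, -p1).
  Each offset vector sums to -n = 0 mod n, so the group generated is the image of the
  subgroup of (Z/n)^2 spanned by the rows of M = [[-p1, -p2], [-p2, -p0]].

  For any integer 2x2 matrix M with Smith normal form diag(e1, e2), the index of the span
  of its rows in (Z/n)^2 is gcd(e1, n) gcd(e2, n) = gcd(det M, n gcd(n, e1)), where e1 is
  the gcd of the entries of M. The span's size and this gcd are both invariant under
  unimodular row and column operations, so the Euclidean algorithm reduces the claim to a
  diagonal matrix, whose span is a product of two cyclic groups. Here e1 = gcd(p0, p1, p2) = 1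
  and det M = p0 p1 - p2^2.
*)

definition span_mod :: "int \<Rightarrow> int \<Rightarrow> int \<Rightarrow> int \<Rightarrow> int \<Rightarrow> (int \<times> int) set" where
  "span_mod n a b c d = (\<lambda>(i, j). ((i * a + j * c) mod n, (i * b + j * d) mod n)) ` UNIV"

definition entry_gcd :: "int \<Rightarrow> int \<Rightarrow> int \<Rightarrow> int \<Rightarrow> int" where
  "entry_gcd a b c d = gcd (gcd a b) (gcd c d)"

definition index_gcd :: "int \<Rightarrow> int \<Rightarrow> int \<Rightarrow> int \<Rightarrow> int \<Rightarrow> int" where
  "index_gcd n a b c d = gcd (a * d - b * c) (n * gcd n (entry_gcd a b c d))"

lemma dvd_entry_gcd_iff:
  "x dvd entry_gcd a b c d \<longleftrightarrow> x dvd a \<and> x dvd b \<and> x dvd c \<and> x dvd d"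
  by (simp add: entry_gcd_def)

lemma entry_gcd_eqI:
  assumes "\<And>x. x dvd a \<and> x dvd b \<and> x dvd c \<and> x dvd d \<longleftrightarrow> x dvd a' \<and> x dvd b' \<and> x dvd c' \<and> x dvd d'"
  shows "entry_gcd a b c d = entry_gcd a' b' c' d'"
proof (rule zdvd_antisym_nonneg)
  show "entry_gcd a b c d dvd entry_gcd a' b' c' d'"
    using dvd_entry_gcd_iff[of "entry_gcd a b c d" a b c d] assms dvd_entry_gcd_iff[of _ a' b' c' d']
    by simp
  show "entry_gcd a' b' c' d' dvd entry_gcd a b c d"
    using dvd_entry_gcd_iff[of "entry_gcd a' b' c' d'" a' b' c' d'] assms dvd_entry_gcd_iff[of _ a b c d]
    by simp
qed (simp_all add: entry_gcd_def)

lemma index_gcd_eqI: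
  assumes "\<bar>a' * d' - b' * c'\<bar> = \<bar>a * d - b * c\<bar>"
    and "\<And>x. x dvd a \<and> x dvd b \<and> x dvd c \<and> x dvd d \<longleftrightarrow> x dvd a' \<and> x dvd b' \<and> x dvd c' \<and> x dvd d'"
  shows "index_gcd n a' b' c' d' = index_gcd n a b c d"
proof -
  have "gcd (a' * d' - b' * c') m = gcd (a * d - b * c) m" for m
    using gcd_abs1_int[of "a' * d' - b' * c'" m] gcd_abs1_int[of "a * d - b * c" m] assms(1) by simp
  then show ?thesis
    using entry_gcd_eqI[OF assms(2)] by (simp add: index_gcd_def)
qed

lemma span_mod_subset: "n > 0 \<Longrightarrow> span_mod n a b c d \<subseteq> {0..<n} \<times> {0..<n}"
  unfolding span_mod_def by auto

lemma span_mod_swap_rows: "span_mod n c d a b = span_mod n a b c d"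
proof -
  have "span_mod n a b c d = (\<lambda>(i, j). ((i * a + j * c) mod n, (i * b + j * d) mod n)) ` range prod.swap"
    unfolding span_mod_def by simp
  also have "\<dots> = span_mod n c d a b"
    unfolding span_mod_def image_image by (simp add: case_prod_unfold add.commute)
  finally show ?thesis ..
qed

lemma span_mod_add_to_first_row: "span_mod n (a + k * c) (b + k * d) c d = span_mod n a b c d"
proof -
  have "range (\<lambda>(i, j). (i, i * k + j)) = (UNIV :: (int \<times> int) set)"
    by (rule surjI[where f = "\<lambda>(i, j). (i, j - i * k)"]) auto
  then have "span_mod n a b c d = (\<lambda>(i, j). ((i * a + j * c) mod n, (i * b + j * d) mod n)) ` range (\<lambda>(i, j). (i, i * k + j))"
    unfolding span_mod_def by simp
  also have "\<dots> = span_mod n (a + k * c) (b + k * d) c d"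
    unfolding span_mod_def image_image by (intro image_cong refl) (auto simp: algebra_simps)
  finally show ?thesis ..
qed

lemma span_mod_swap_columns: "span_mod n b a d c = prod.swap ` span_mod n a b c d"
  unfolding span_mod_def image_image by (simp add: case_prod_unfold)

lemma span_mod_add_to_second_column:
  "span_mod n a (b + k * a) c (d + k * c) = (\<lambda>(x, y). (x, (y + k * x) mod n)) ` span_mod n a b c d"
proof -
  have shear: "(p mod n + k * (q mod n)) mod n = (p + k * q) mod n" for p q :: int
    by (metis mod_add_left_eq mod_add_right_eq mod_mult_right_eq)
  have "(i * (b + k * a) + j * (d + k * c)) mod n = ((i * b + j * d) mod n + k * ((i * a + j * c) mod n)) mod n"
    for i j
    unfolding shear by (simp add: algebra_simps)
  then show ?thesis
    by (simp add: span_mod_def image_image case_prod_unfold)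
qed

lemma inj_on_shear_mod: "inj_on (\<lambda>(x, y). (x, (y + k * x) mod n)) ({0..<n} \<times> {0..<n :: int})"
proof (rule inj_on_inverseI[where g = "\<lambda>(x, y). (x, (y - k * x) mod n)"])
  fix p assume "p \<in> {0..<n} \<times> {0..<n}"
  then obtain x y where "p = (x, y)" "0 \<le> y" "y < n" by auto
  then show "(\<lambda>(x, y). (x, (y - k * x) mod n)) ((\<lambda>(x, y). (x, (y + k * x) mod n)) p) = p"
    by (simp add: mod_diff_left_eq)
qed

lemma card_span_mod_add_to_second_column:
  assumes "n > 0"
  shows "card (span_mod n a (b + k * a) c (d + k * c)) = card (span_mod n a b c d)"
proof -
  have "inj_on (\<lambda>(x, y). (x, (y + k * x) mod n)) (span_mod n a b c d)"
    using inj_on_shear_mod span_mod_subset[OF assms] by (rule inj_on_subset)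
  then show ?thesis
    unfolding span_mod_add_to_second_column by (rule card_image)
qed

definition index_product :: "int \<Rightarrow> int \<Rightarrow> int \<Rightarrow> int \<Rightarrow> int \<Rightarrow> int" where
  "index_product n a b c d = int (card (span_mod n a b c d)) * index_gcd n a b c d"

lemma index_product_swap_rows: "index_product n c d a b = index_product n a b c d"
proof -
  have "index_gcd n c d a b = index_gcd n a b c d"
    by (rule index_gcd_eqI) (auto simp: abs_minus_commute mult.commute)
  then show ?thesis
    by (simp add: index_product_def span_mod_swap_rows)
qed

lemma index_product_add_to_first_row: "index_product n (a + k * c) (b + k * d) c d = index_product n a b c d"
proof -
  have "index_gcd n (a + k * c) (b + k * d) c d = index_gcd n a b c d"
    by (rule index_gcd_eqI) (auto simp: algebra_simps dvd_add_left_iff)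
  then show ?thesis
    by (simp add: index_product_def span_mod_add_to_first_row)
qed

lemma index_product_swap_columns: "index_product n b a d c = index_product n a b c d"
proof -
  have "index_gcd n b a d c = index_gcd n a b c d"
    by (rule index_gcd_eqI) (auto simp: abs_minus_commute mult.commute)
  moreover have "card (span_mod n b a d c) = card (span_mod n a b c d)"
    by (subst span_mod_swap_columns, rule card_image) (auto simp: inj_on_def)
  ultimately show ?thesis
    by (simp add: index_product_def)
qed

lemma index_product_add_to_second_column:
  assumes "n > 0"
  shows "index_product n a (b + k * a) c (d + k * c) = index_product n a b c d"
proof -
  have "index_gcd n a (b + k * a) c (d + k * c) = index_gcd n a b c d"
    by (rule index_gcd_eqI) (auto simp: algebra_simps dvd_add_left_iff)
  then show ?thesis
    by (simp add: index_product_def card_span_mod_add_to_second_column[OF assms])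
qed

lemma range_mult_mod_eq:
  fixes n a :: int
  assumes "n > 0"
  shows "range (\<lambda>i. (i * a) mod n) = {x \<in> {0..<n}. gcd a n dvd x}"
proof (intro equalityI subsetI)
  fix x assume "x \<in> range (\<lambda>i. (i * a) mod n)"
  then obtain i where "x = (i * a) mod n" by blast
  then show "x \<in> {x \<in> {0..<n}. gcd a n dvd x}"
    using assms by (simp add: dvd_mod)
next
  fix x assume "x \<in> {x \<in> {0..<n}. gcd a n dvd x}"
  then obtain k where x: "x = gcd a n * k" and "0 \<le> x" "x < n"
    by (auto elim: dvdE)
  obtain u v where uv: "u * a + v * n = gcd a n"
    using bezout_int[of a n] by blast
  have "(k * u) * a = x + (- (k * v)) * n"
    unfolding x uv[symmetric] by (simp add: algebra_simps)
  then have "((k * u) * a) mod n = x mod n"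
    by (simp only: mod_mult_self1)
  also have "x mod n = x"
    using \<open>0 \<le> x\<close> \<open>x < n\<close> by simp
  finally show "x \<in> range (\<lambda>i. (i * a) mod n)"
    by (metis rangeI)
qed

lemma card_multiples_below:
  fixes n g :: int
  assumes "g > 0" and "g dvd n" and "n \<ge> 0"
  shows "int (card {x \<in> {0..<n}. g dvd x}) = n div g"
proof -
  from \<open>g dvd n\<close> obtain m where n_eq: "n = g * m"
    by (rule dvdE)
  have "{x \<in> {0..<n}. g dvd x} = (\<lambda>k. g * k) ` {0..<m}"
    using \<open>g > 0\<close> by (auto simp: n_eq zero_le_mult_iff elim!: dvdE)
  moreover have "inj_on (\<lambda>k. g * k) {0..<m}"
    using \<open>g > 0\<close> by (simp add: inj_on_def)
  moreover have "m \<ge> 0"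
    using assms by (simp add: n_eq zero_le_mult_iff)
  ultimately show ?thesis
    using \<open>g > 0\<close> by (simp add: card_image n_eq)
qed

lemma card_multiples_mod:
  fixes n a :: int
  assumes "n > 0"
  shows "int (card (range (\<lambda>i. (i * a) mod n))) = n div gcd a n"
  unfolding range_mult_mod_eq[OF assms] using assms by (intro card_multiples_below) simp_all

lemma index_gcd_diagonal:
  assumes "n > 0"
  shows "index_gcd n a 0 0 d = gcd a n * gcd d n"
proof -
  have d_gcd: "\<bar>gcd a n * d\<bar> = gcd (d * a) (d * n)"
    using gcd_mult_distrib_int[of d a n] by (simp add: abs_mult mult.commute)
  have n_gcd: "gcd a n * n = gcd (n * a) (n * n)"
    using gcd_mult_distrib_int[of n a n] assms by (simp add: mult.commute)
  have "gcd a n * gcd d n = gcd (gcd a n * d) (gcd a n * n)"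
    using gcd_mult_distrib_int[of "gcd a n" d n] by simp
  also have "\<dots> = gcd (gcd (d * a) (d * n)) (gcd (n * a) (n * n))"
    by (metis d_gcd n_gcd gcd_abs1_int)
  also have "\<dots> = gcd (a * d) (gcd (n * n) (gcd (n * a) (n * d)))"
    by (simp add: ac_simps)
  also have "\<dots> = gcd (a * d) (n * gcd n (gcd a d))"
    using gcd_mult_distrib_int[of n n "gcd a d"] gcd_mult_distrib_int[of n a d] assms by simp
  finally show ?thesis
    by (simp add: index_gcd_def entry_gcd_def)
qed

lemma span_mod_diagonal: "span_mod n a 0 0 d = range (\<lambda>i. (i * a) mod n) \<times> range (\<lambda>j. (j * d) mod n)"
  unfolding span_mod_def by auto

lemma index_product_diagonal_eq_square:
  assumes "n > 0"
  shows "index_product n a 0 0 d = n\<^sup>2"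
proof -
  have "int (card (span_mod n a 0 0 d)) = (n div gcd a n) * (n div gcd d n)"
    by (simp add: span_mod_diagonal card_cartesian_product card_multiples_mod[OF assms])
  moreover note index_gcd_diagonal[OF assms]
  ultimately have "index_product n a 0 0 d = ((n div gcd a n) * gcd a n) * ((n div gcd d n) * gcd d n)"
    by (simp add: index_product_def mult_ac)
  then show ?thesis
    by (simp add: power2_eq_square)
qed

lemma index_product_add_to_second_row: "index_product n a b (c + k * a) (d + k * b) = index_product n a b c d"
  by (metis index_product_add_to_first_row index_product_swap_rows)

lemma index_product_eq_square_if_corner_dvd:
  assumes "n > 0" and "a dvd c" and "a dvd b"
  shows "index_product n a b c d = n\<^sup>2"
proof -
  from \<open>a dvd b\<close> obtain b' where b': "b = a * b'" ..
  from \<open>a dvd c\<close> obtain c' where c': "c = a * c'" ..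
  let ?d' = "d + (- c') * b"
  have "index_product n a b c d = index_product n a b (c + (- c') * a) ?d'"
    by (simp only: index_product_add_to_second_row)
  also have "\<dots> = index_product n a (b + (- b') * a) (c + (- c') * a) (?d' + (- b') * (c + (- c') * a))"
    by (simp only: index_product_add_to_second_column[OF assms(1)])
  also have "\<dots> = index_product n a 0 0 ?d'"
    by (simp add: b' c')
  also have "\<dots> = n\<^sup>2"
    by (rule index_product_diagonal_eq_square[OF assms(1)])
  finally show ?thesis .
qed

lemma index_product_eq_square_if_corner_nonzero:
  assumes "n > 0" and "a \<noteq> 0"
  shows "index_product n a b c d = n\<^sup>2"
  using assms(2)
proof (induction "nat \<bar>a\<bar>" arbitrary: a b c d rule: less_induct)
  case less
  have smaller: "nat \<bar>r mod a\<bar> < nat \<bar>a\<bar>" for r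
    using abs_mod_less[of a r] less.prems by simp
  show ?case
  proof (cases "a dvd c")
    case False
    then have "c mod a \<noteq> 0"
      by (simp add: dvd_eq_mod_eq_0)
    have "index_product n a b c d = index_product n (c + (- (c div a)) * a) (d + (- (c div a)) * b) a b"
      by (metis index_product_add_to_first_row index_product_swap_rows)
    also have "\<dots> = index_product n (c mod a) (d + (- (c div a)) * b) a b"
      by (simp add: minus_div_mult_eq_mod [symmetric])
    also have "\<dots> = n\<^sup>2"
      using less.hyps[OF smaller \<open>c mod a \<noteq> 0\<close>] .
    finally show ?thesis .
  next
    case a_dvd_c: True
    show ?thesis
    proof (cases "a dvd b")
      case False
      then have "b mod a \<noteq> 0"
        by (simp add: dvd_eq_mod_eq_0)
      have "index_product n a b c d = index_product n (b + (- (b div a)) * a) a (d + (- (b div a)) * c) c"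
        by (metis index_product_add_to_second_column[OF assms(1)] index_product_swap_columns)
      also have "\<dots> = index_product n (b mod a) a (d + (- (b div a)) * c) c"
        by (simp add: minus_div_mult_eq_mod [symmetric])
      also have "\<dots> = n\<^sup>2"
        using less.hyps[OF smaller \<open>b mod a \<noteq> 0\<close>] .
      finally show ?thesis .
    next
      case True
      with a_dvd_c show ?thesis
        by (rule index_product_eq_square_if_corner_dvd[OF assms(1)])
    qed
  qed
qed

theorem card_span_mod_mult_index_gcd:
  assumes "n > 0"
  shows "int (card (span_mod n a b c d)) * index_gcd n a b c d = n\<^sup>2"
proof -
  consider "a \<noteq> 0" | "c \<noteq> 0" | "b \<noteq> 0" | "a = 0" "b = 0" "c = 0"
    by blast
  then have "index_product n a b c d = n\<^sup>2"
  proof cases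
    case 1
    then show ?thesis by (rule index_product_eq_square_if_corner_nonzero[OF assms])
  next
    case 2
    then show ?thesis by (metis index_product_eq_square_if_corner_nonzero[OF assms] index_product_swap_rows)
  next
    case 3
    then show ?thesis by (metis index_product_eq_square_if_corner_nonzero[OF assms] index_product_swap_columns)
  next
    case 4
    then show ?thesis using index_product_diagonal_eq_square[OF assms] by simp
  qed
  then show ?thesis
    by (simp add: index_product_def)
qed

definition level_offset :: "int \<Rightarrow> int \<Rightarrow> nat \<Rightarrow> int" where
  "level_offset x y i = (if i = 0 then x else if i = 1 then y else - (x + y))"

definition level_shift :: "nat \<Rightarrow> int \<Rightarrow> int \<Rightarrow> nat \<times> nat \<Rightarrow> nat \<times> nat" where
  "level_shift n x y =
     restrict (\<lambda>(m, i). (nat ((int m + level_offset x y i) mod int n), i)) (dessin_edges n)"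

lemma level_shift_apply:
  "(m, i) \<in> dessin_edges n \<Longrightarrow> level_shift n x y (m, i) = (nat ((int m + level_offset x y i) mod int n), i)"
  by (simp add: level_shift_def)

lemma level_shift_in_dessin_edges:
  "n > 0 \<Longrightarrow> e \<in> dessin_edges n \<Longrightarrow> level_shift n x y e \<in> dessin_edges n"
  by (auto simp: level_shift_def dessin_edges_def nat_less_iff)

lemma level_offset_mod: "level_offset (x mod n) (y mod n) i mod n = level_offset x y i mod n"
proof -
  have "(- (x mod n + y mod n)) mod n = (- (x + y)) mod n"
    by (rule mod_minus_cong) (simp add: mod_add_eq)
  then show ?thesis
    by (simp add: level_offset_def)
qed

lemma level_shift_mod: "level_shift n (x mod int n) (y mod int n) = level_shift n x y"
proof -
  have "(int m + level_offset (x mod int n) (y mod int n) i) mod int n = (int m + level_offset x y i) mod int n"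
    for m i
    by (metis level_offset_mod mod_add_right_eq)
  then show ?thesis
    by (simp add: level_shift_def)
qed

lemma level_offset_add: "level_offset x y i + level_offset x' y' i = level_offset (x + x') (y + y') i"
  by (simp add: level_offset_def)

lemma level_shift_level_shift:
  assumes "n > 0" "e \<in> dessin_edges n"
  shows "level_shift n x y (level_shift n x' y' e) = level_shift n (x + x') (y + y') e"
proof -
  obtain m i where e: "e = (m, i)" by force
  have "(int (nat ((int m + level_offset x' y' i) mod int n)) + level_offset x y i) mod int n
      = ((int m + level_offset x' y' i) mod int n + level_offset x y i) mod int n"
    using assms(1) by simp
  also have "\<dots> = (int m + level_offset x' y' i + level_offset x y i) mod int n"
    by (rule mod_add_left_eq)
  also have "\<dots> = (int m + (level_offset x y i + level_offset x' y' i)) mod int n"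
    by (simp add: algebra_simps)
  also have "\<dots> = (int m + level_offset (x + x') (y + y') i) mod int n"
    by (simp only: level_offset_add)
  finally show ?thesis
    using assms level_shift_in_dessin_edges[OF assms]
    by (simp add: e level_shift_apply)
qed

lemma compose_level_shift:
  assumes "n > 0"
  shows "compose (dessin_edges n) (level_shift n x y) (level_shift n x' y') = level_shift n (x + x') (y + y')"
proof
  fix e
  show "compose (dessin_edges n) (level_shift n x y) (level_shift n x' y') e = level_shift n (x + x') (y + y') e"
  proof (cases "e \<in> dessin_edges n")
    case True
    then show ?thesis by (simp add: compose_def level_shift_level_shift[OF assms])
  next
    case False
    then show ?thesis by (simp add: compose_def level_shift_def)
  qed
qed

lemma level_shift_zero: "level_shift n 0 0 = (\<lambda>e \<in> dessin_edges n. e)"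
  by (auto simp: level_shift_def level_offset_def dessin_edges_def)

lemma level_shift_in_carrier:
  assumes "n > 0"
  shows "level_shift n x y \<in> carrier (BijGroup (dessin_edges n))"
proof -
  have "bij_betw (level_shift n x y) (dessin_edges n) (dessin_edges n)"
  proof (rule bij_betw_byWitness[where f' = "level_shift n (- x) (- y)"])
    show "\<forall>e \<in> dessin_edges n. level_shift n (- x) (- y) (level_shift n x y e) = e"
      "\<forall>e \<in> dessin_edges n. level_shift n x y (level_shift n (- x) (- y) e) = e"
      using level_shift_level_shift[OF assms] level_shift_zero by simp_all
  qed (use level_shift_in_dessin_edges[OF assms] in blast)+
  then show ?thesis
    by (simp add: BijGroup_def Bij_def level_shift_def)
qed

lemma level_shift_mult:
  "n > 0 \<Longrightarrow> level_shift n x y \<otimes>\<^bsub>BijGroup (dessin_edges n)\<^esub> level_shift n x' y' = level_shift n (x + x') (y + y')"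
  using level_shift_in_carrier by (simp add: BijGroup_def compose_level_shift)

lemma level_shift_one: "\<one>\<^bsub>BijGroup (dessin_edges n)\<^esub> = level_shift n 0 0"
  by (simp add: BijGroup_def level_shift_zero)

lemma level_shift_inv:
  assumes "n > 0"
  shows "inv\<^bsub>BijGroup (dessin_edges n)\<^esub> level_shift n x y = level_shift n (- x) (- y)"
proof -
  interpret group "BijGroup (dessin_edges n)"
    by (rule group_BijGroup)
  show ?thesis
    by (rule inv_equality) (simp_all add: level_shift_mult level_shift_one level_shift_in_carrier assms)
qed

lemma level_shift_int_pow:
  assumes "n > 0"
  shows "level_shift n x y [^]\<^bsub>BijGroup (dessin_edges n)\<^esub> (k :: int) = level_shift n (k * x) (k * y)"
proof -
  have nat_pow: "level_shift n x y [^]\<^bsub>BijGroup (dessin_edges n)\<^esub> m = level_shift n (int m * x) (int m * y)"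
    for m :: nat
    by (induction m) (simp_all add: level_shift_one level_shift_mult[OF assms] algebra_simps)
  show ?thesis
    by (simp add: int_pow_def2 nat_pow level_shift_inv[OF assms])
qed

lemma inj_on_level_shift:
  assumes "n > 0"
  shows "inj_on (\<lambda>(x, y). level_shift n x y) ({0..<int n} \<times> {0..<int n})"
proof (rule inj_onI, clarify)
  fix x y x' y' :: int
  assume ranges: "x \<in> {0..<int n}" "y \<in> {0..<int n}" "x' \<in> {0..<int n}" "y' \<in> {0..<int n}"
    and eq: "level_shift n x y = level_shift n x' y'"
  have "(0, 0) \<in> dessin_edges n" "(0, 1) \<in> dessin_edges n"
    using assms by (simp_all add: dessin_edges_def)
  moreover have "level_shift n x y (0, 0) = level_shift n x' y' (0, 0)"
    "level_shift n x y (0, 1) = level_shift n x' y' (0, 1)"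
    by (simp_all only: eq)
  ultimately show "x = x' \<and> y = y'"
    using ranges by (simp add: level_shift_apply level_offset_def eq_nat_nat_iff)
qed

lemma sigma0_apply: "(m, i) \<in> dessin_edges n \<Longrightarrow> sigma0 n (m, i) = (m, (i + 1) mod 3)"
  by (simp add: sigma0_def)

lemma sigma1_apply:
  assumes "n = p0 + p1 + p2" "(m, i) \<in> dessin_edges n"
  shows "sigma1 p0 p1 p2 (m, i) =
    (if i = 0 then (sub_mod n m p1, 2) else if i = 1 then (sub_mod n m p2, 0) else (sub_mod n m p0, 1))"
  using assms by (simp add: sigma1_def Let_def)

lemma sub_mod_less: "m < n \<Longrightarrow> sub_mod n m p < n"
  by (simp add: sub_mod_def nat_less_iff)

lemma sub_mod_eq_add_mod:
  assumes "int n dvd int p + q"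
  shows "sub_mod n m p = nat ((int m + q) mod int n)"
proof -
  have "int n dvd (int m + q) - (int m - int p)"
    using assms by (simp add: algebra_simps)
  then have "(int m + q) mod int n = (int m - int p) mod int n"
    by (simp only: mod_eq_dvd_iff)
  then show ?thesis
    by (simp add: sub_mod_def)
qed

lemma compose_sigma0_sigma1:
  assumes "n = p0 + p1 + p2"
  shows "compose (dessin_edges n) (sigma0 n) (sigma1 p0 p1 p2) = level_shift n (- int p1) (- int p2)"
proof
  fix e
  show "compose (dessin_edges n) (sigma0 n) (sigma1 p0 p1 p2) e = level_shift n (- int p1) (- int p2) e"
  proof (cases "e \<in> dessin_edges n")
    case True
    then obtain m i where e: "e = (m, i)" and "i < 3"
      by (auto simp: dessin_edges_def)
    \<comment> \<open>on level 2 the offset p1 + p2 agrees with -p0 modulo n\<close>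
    have offsets: "sub_mod n m p1 = nat ((int m + level_offset (- int p1) (- int p2) 0) mod int n)"
      "sub_mod n m p2 = nat ((int m + level_offset (- int p1) (- int p2) 1) mod int n)"
      "sub_mod n m p0 = nat ((int m + level_offset (- int p1) (- int p2) 2) mod int n)"
      using assms by - (rule sub_mod_eq_add_mod, simp add: level_offset_def ac_simps)+
    consider "i = 0" | "i = 1" | "i = 2"
      using \<open>i < 3\<close> by linarith
    then show ?thesis
      using True
      by cases (simp_all add: e compose_def sigma0_apply sigma1_apply[OF assms] level_shift_apply
          dessin_edges_def sub_mod_less, simp_all add: offsets)
  qed (simp add: compose_def level_shift_def)
qed

lemma compose_sigma1_sigma0:
  assumes "n = p0 + p1 + p2"
  shows "compose (dessin_edges n) (sigma1 p0 p1 p2) (sigma0 n) = level_shift n (- int p2) (- int p0)"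
proof
  fix e
  show "compose (dessin_edges n) (sigma1 p0 p1 p2) (sigma0 n) e = level_shift n (- int p2) (- int p0) e"
  proof (cases "e \<in> dessin_edges n")
    case True
    then obtain m i where e: "e = (m, i)" and "i < 3"
      by (auto simp: dessin_edges_def)
    have offsets: "sub_mod n m p2 = nat ((int m + level_offset (- int p2) (- int p0) 0) mod int n)"
      "sub_mod n m p0 = nat ((int m + level_offset (- int p2) (- int p0) 1) mod int n)"
      "sub_mod n m p1 = nat ((int m + level_offset (- int p2) (- int p0) 2) mod int n)"
      using assms by - (rule sub_mod_eq_add_mod, simp add: level_offset_def ac_simps)+
    consider "i = 0" | "i = 1" | "i = 2"
      using \<open>i < 3\<close> by linarith
    then show ?thesis
      using True
      by cases (simp_all add: e compose_def sigma0_apply sigma1_apply[OF assms] level_shift_apply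
          dessin_edges_def, simp_all add: offsets)
  qed (simp add: compose_def level_shift_def)
qed

definition level_shift_span :: "nat \<Rightarrow> int \<Rightarrow> int \<Rightarrow> int \<Rightarrow> int \<Rightarrow> (nat \<times> nat \<Rightarrow> nat \<times> nat) set" where
  "level_shift_span n a b c d = range (\<lambda>(i, j). level_shift n (i * a + j * c) (i * b + j * d))"

lemma level_shift_spanI: "level_shift n (i * a + j * c) (i * b + j * d) \<in> level_shift_span n a b c d"
  unfolding level_shift_span_def by (rule image_eqI[of _ _ "(i, j)"]) simp_all

lemma level_shift_span_eq_image_span_mod:
  "level_shift_span n a b c d = (\<lambda>(x, y). level_shift n x y) ` span_mod (int n) a b c d"
  by (simp add: level_shift_span_def span_mod_def image_image case_prod_unfold level_shift_mod)

lemma subgroup_level_shift_span: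
  assumes "n > 0"
  shows "subgroup (level_shift_span n a b c d) (BijGroup (dessin_edges n))" (is "subgroup ?H ?G")
proof (rule group.subgroupI[OF group_BijGroup])
  show "?H \<subseteq> carrier ?G" "?H \<noteq> {}"
    using level_shift_in_carrier[OF assms] by (auto simp: level_shift_span_def)
next
  fix h assume "h \<in> ?H"
  then obtain i j where "h = level_shift n (i * a + j * c) (i * b + j * d)"
    by (auto simp: level_shift_span_def)
  then have "inv\<^bsub>?G\<^esub> h = level_shift n ((- i) * a + (- j) * c) ((- i) * b + (- j) * d)"
    by (simp add: level_shift_inv[OF assms])
  then show "inv\<^bsub>?G\<^esub> h \<in> ?H"
    using level_shift_spanI by presburger
next
  fix h h' assume "h \<in> ?H" "h' \<in> ?H"
  then obtain i j i' j' where "h = level_shift n (i * a + j * c) (i * b + j * d)"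
    and "h' = level_shift n (i' * a + j' * c) (i' * b + j' * d)"
    by (auto simp: level_shift_span_def)
  then have "h \<otimes>\<^bsub>?G\<^esub> h' = level_shift n ((i + i') * a + (j + j') * c) ((i + i') * b + (j + j') * d)"
    by (simp add: level_shift_mult[OF assms] algebra_simps)
  then show "h \<otimes>\<^bsub>?G\<^esub> h' \<in> ?H"
    using level_shift_spanI by presburger
qed

lemma level_shift_span_subset_generate:
  assumes "n > 0"
  shows "level_shift_span n a b c d \<subseteq> generate (BijGroup (dessin_edges n)) {level_shift n a b, level_shift n c d}"
    (is "_ \<subseteq> ?K")
proof (clarsimp simp: level_shift_span_def)
  let ?G = "BijGroup (dessin_edges n)"
  interpret group ?G
    by (rule group_BijGroup)
  fix i j :: int
  have K: "subgroup ?K ?G"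
    using level_shift_in_carrier[OF assms] by (intro generate_is_subgroup) auto
  have "level_shift n a b [^]\<^bsub>?G\<^esub> i \<in> ?K"
    by (rule subgroup_int_pow_closed[OF K], rule generate.incl) simp
  moreover have "level_shift n c d [^]\<^bsub>?G\<^esub> j \<in> ?K"
    by (rule subgroup_int_pow_closed[OF K], rule generate.incl) simp
  ultimately have "level_shift n a b [^]\<^bsub>?G\<^esub> i \<otimes>\<^bsub>?G\<^esub> level_shift n c d [^]\<^bsub>?G\<^esub> j \<in> ?K"
    by (rule subgroup.m_closed[OF K])
  then show "level_shift n (i * a + j * c) (i * b + j * d) \<in> ?K"
    by (simp add: level_shift_int_pow[OF assms] level_shift_mult[OF assms])
qed

lemma generate_level_shifts:
  assumes "n > 0"
  shows "generate (BijGroup (dessin_edges n)) {level_shift n a b, level_shift n c d}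
    = (\<lambda>(x, y). level_shift n x y) ` span_mod (int n) a b c d"
proof -
  have "{level_shift n a b, level_shift n c d} \<subseteq> level_shift_span n a b c d"
    using level_shift_spanI[of n 1 a 0 c b d] level_shift_spanI[of n 0 a 1 c b d] by simp
  then have "generate (BijGroup (dessin_edges n)) {level_shift n a b, level_shift n c d}
      \<subseteq> level_shift_span n a b c d"
    by (rule group.generate_subgroup_incl[OF group_BijGroup _ subgroup_level_shift_span[OF assms]])
  with level_shift_span_subset_generate[OF assms] show ?thesis
    unfolding level_shift_span_eq_image_span_mod[symmetric] by (rule equalityI[rotated])
qed

lemma card_generate_level_shifts:
  assumes "n > 0"
  shows "card (generate (BijGroup (dessin_edges n)) {level_shift n a b, level_shift n c d})
    = card (span_mod (int n) a b c d)"
  unfolding generate_level_shifts[OF assms]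
  by (intro card_image inj_on_subset[OF inj_on_level_shift[OF assms] span_mod_subset]) (use assms in simp)

theorem lemma3:
  fixes p0 p1 p2 :: nat
  assumes "p0 > 0" and "p1 > 0" and "p2 > 0"
    and "gcd p0 (gcd p1 p2) = 1"
  defines "n \<equiv> p0 + p1 + p2"
  defines "E \<equiv> dessin_edges n"
  defines "s0 \<equiv> sigma0 n"
  defines "s1 \<equiv> sigma1 p0 p1 p2"
  defines "\<alpha> \<equiv> gcd (int n) (int p0 * int p1 - (int p2)^2)"
  shows "int (card (generate (BijGroup E) {compose E s0 s1, compose E s1 s0})) * \<alpha> = (int n)^2"
proof -
  have n_eq: "n = p0 + p1 + p2" and "n > 0"
    using assms(1) by (simp_all add: n_def)
  have "gcd (int p0) (gcd (int p1) (int p2)) = 1"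
    using assms(4) by (metis gcd_int_int_eq of_nat_1)
  then have "entry_gcd (- int p1) (- int p2) (- int p2) (- int p0) = 1"
    by (simp add: entry_gcd_def ac_simps)
  then have "index_gcd (int n) (- int p1) (- int p2) (- int p2) (- int p0) = \<alpha>"
    by (simp add: index_gcd_def \<alpha>_def gcd.commute power2_eq_square mult.commute)
  moreover have "card (generate (BijGroup E) {compose E s0 s1, compose E s1 s0})
      = card (span_mod (int n) (- int p1) (- int p2) (- int p2) (- int p0))"
    unfolding E_def s0_def s1_def compose_sigma0_sigma1[OF n_eq] compose_sigma1_sigma0[OF n_eq]
    by (rule card_generate_level_shifts[OF \<open>n > 0\<close>])
  ultimately show ?thesis
    using card_span_mod_mult_index_gcd[of "int n" "- int p1" "- int p2" "- int p2" "- int p0"] \<open>n > 0\<close>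
    by simp
qed

end
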